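(* Let $n\ge3$. The following relations hold in $\mathrm{YTL}_{d,n}(u)$: (1) $g_ig_{i+1}g_i+g_ig_{i+1}+g_{i+1}g_i+g_i+g_{i+1}+1=0$ for $1\le i<n-1$; (2) $(t_i-t_{i+2})(1+g_i)+(t_i-t_{i+1})(g_{i+1}+g_{i+1}g_i)=0$ for $1\le i<n-1$; (3) $(t_{i+2}-t_i)(1+g_{i+1})+(t_{i+2}-t_{i+1})(g_i+g_ig_{i+1})=0$ for $1\le i<n-1$; (4) $(t_{i+2}-t_{i+1})(t_{i+2}-t_i)(g_i+1)=0$ for $1\le i<n-1$; (5) $(t_{i-1}-t_{i+1})(t_{i-1}-t_i)(g_i+1)=0$ for $1<i\le n-1$; (6) $(t_i-t_{i+1})(t_{i+1}-t_{i+2})(t_i-t_{i+2})=0$ for $1\le i<n-1$.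
   Context: Let $d,n\ge1$ be integers and $u$ an indeterminate. The Yokonuma–Hecke algebra $\mathrm{Y}_{d,n}(u)$ is the associative $\mathbb{C}[u,u^{-1}]$-algebra generated by $g_1,\dots,g_{n-1},t_1,\dots,t_n$ subject to: $g_ig_j=g_jg_i$ for $|i-j|>1$; $g_ig_{i+1}g_i=g_{i+1}g_ig_{i+1}$ for $1\le i\le n-2$; $t_it_j=t_jt_i$ for all $i,j$; $t_jg_i=g_it_{s_i(j)}$ for all $i,j$, where $s_i$ is the transposition $(i,i+1)$; $t_j^d=1$ for all $j$; and $g_i^2=1+(u-1)e_i+(u-1)e_ig_i$, where $e_i=\frac1d\sum_{s=0}^{d-1}t_i^st_{i+1}^{-s}$. For $n\ge3$, the Yokonuma–Temperley–Lieb algebra $\mathrm{YTL}_{d,n}(u)$ is the quotient of $\mathrm{Y}_{d,n}(u)$ by the two-sided ideal generated by the elements $g_ig_{i+1}g_i+g_ig_{i+1}+g_{i+1}g_i+g_i+g_{i+1}+1$, $1\le i\le n-2$; images of the generators in the quotient are denoted by the same letters. *)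

theory Defs
  imports Complex_Main
begin

definition sw :: "nat \<Rightarrow> nat \<Rightarrow> nat" where
  "sw i j = (if j = i then i + 1 else if j = i + 1 then i else j)"

text \<open>A C[u,u^-1]-algebra structure on a ring: a unital ring homomorphism phi from the
complex numbers into the centre, and a central unit u.\<close>
definition laurent_alg :: "(complex \<Rightarrow> 'a::ring_1) \<Rightarrow> 'a \<Rightarrow> bool" where
  "laurent_alg phi u \<longleftrightarrow>
     phi 1 = 1 \<and> (\<forall>a b. phi (a + b) = phi a + phi b) \<and> (\<forall>a b. phi (a * b) = phi a * phi b)
     \<and> (\<forall>a x. phi a * x = x * phi a)
     \<and> (\<forall>x. u * x = x * u) \<and> (\<exists>v. u * v = 1 \<and> v * u = 1)"

text \<open>The idempotent e_i = (1/d) sum_{s=0}^{d-1} t_i^s t_{i+1}^{-s}; since t_{i+1}^d = 1,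
t_{i+1}^{-s} = t_{i+1}^{d-s}.\<close>
definition ee :: "(complex \<Rightarrow> 'a::ring_1) \<Rightarrow> nat \<Rightarrow> (nat \<Rightarrow> 'a) \<Rightarrow> nat \<Rightarrow> 'a" where
  "ee phi d t i = phi (1 / of_nat d) * (\<Sum>s<d. t i ^ s * t (i + 1) ^ (d - s))"

text \<open>Elements g_1..g_{n-1}, t_1..t_n of a C[u,u^-1]-algebra satisfying the defining
relations of the Yokonuma-Hecke algebra Y_{d,n}(u).\<close>
definition YH_rels :: "nat \<Rightarrow> nat \<Rightarrow> (complex \<Rightarrow> 'a::ring_1) \<Rightarrow> 'a \<Rightarrow> (nat \<Rightarrow> 'a) \<Rightarrow> (nat \<Rightarrow> 'a) \<Rightarrow> bool" where
  "YH_rels d n phi u g t \<longleftrightarrow>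
     laurent_alg phi u
     \<and> (\<forall>i j. 1 \<le> i \<and> i \<le> n - 1 \<and> 1 \<le> j \<and> j \<le> n - 1 \<and> (i + 1 < j \<or> j + 1 < i)
              \<longrightarrow> g i * g j = g j * g i)
     \<and> (\<forall>i. 1 \<le> i \<and> i \<le> n - 2 \<longrightarrow> g i * g (i+1) * g i = g (i+1) * g i * g (i+1))
     \<and> (\<forall>i j. 1 \<le> i \<and> i \<le> n \<and> 1 \<le> j \<and> j \<le> n \<longrightarrow> t i * t j = t j * t i)
     \<and> (\<forall>i j. 1 \<le> i \<and> i \<le> n - 1 \<and> 1 \<le> j \<and> j \<le> n \<longrightarrow> t j * g i = g i * t (sw i j))
     \<and> (\<forall>j. 1 \<le> j \<and> j \<le> n \<longrightarrow> t j ^ d = 1)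
     \<and> (\<forall>i. 1 \<le> i \<and> i \<le> n - 1 \<longrightarrow>
          g i ^ 2 = 1 + (u - 1) * ee phi d t i + (u - 1) * ee phi d t i * g i)"

text \<open>Additional defining relations of the Yokonuma-Temperley-Lieb quotient YTL_{d,n}(u).\<close>
definition YTL_rels :: "nat \<Rightarrow> nat \<Rightarrow> (complex \<Rightarrow> 'a::ring_1) \<Rightarrow> 'a \<Rightarrow> (nat \<Rightarrow> 'a) \<Rightarrow> (nat \<Rightarrow> 'a) \<Rightarrow> bool" where
  "YTL_rels d n phi u g t \<longleftrightarrow>
     YH_rels d n phi u g t
     \<and> (\<forall>i. 1 \<le> i \<and> i \<le> n - 2 \<longrightarrow>
          g i * g (i+1) * g i + g i * g (i+1) + g (i+1) * g i + g i + g (i+1) + 1 = 0)"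

end

theory Submission
  imports Defs
begin

(* All six relations are local: for 1 <= i < n-1 they only involve
   x = t_i, y = t_(i+1), z = t_(i+2), a = g_i, b = g_(i+1).  These satisfy: x, y, z
   commute pairwise, a swaps x and y and fixes z, b swaps y and z and fixes x.  We call
   such a quintuple an intertwined triple (a locale); the notion is invariant under the
   mirror symmetry (x, y, z, a, b) -> (z, y, x, b, a).  Relation (1) is an axiom.
   (2) follows from the identity  (2) = x R - R z,  R the Temperley-Lieb element.
   (4) is the heart: for W = (z-y)(z-x)(1+a) one derives b W = W from (2), then
   3 W + q E W = 0 from the quadratic relation, and E E W = 0 because E is killed by
   the sandwich with b; since 3 is invertible this forces W = 0.  (3) and (5) are the
   mirror images of (2) and (4).  (6): D = (x-y)(y-z)(x-z) anticommutes with a and b,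
   so (4) and its mirror give a D = b D = D, whence 6 D = R D = 0.
   The idempotents e_i are handled through the sum  F(x,y) = sum_(s<d) x^s y^(d-s),
   for which we prove transport along intertwiners, symmetry and  (x-y) F(x,y) = 0. *)

section \<open>Sums of monomials in two commuting roots of unity\<close>

(* The unnormalised idempotent: e_i = phi(1/d) * diag_sum d t_i t_(i+1). *)
definition diag_sum :: "nat \<Rightarrow> 'a::ring_1 \<Rightarrow> 'a \<Rightarrow> 'a" where
  "diag_sum d x y = (\<Sum>s<d. x ^ s * y ^ (d - s))"

lemma power_intertwine:
  fixes x g x' :: "'a::ring_1"
  assumes "x * g = g * x'"
  shows "x ^ k * g = g * x' ^ k"
proof (induction k)
  case (Suc k)
  have "x ^ Suc k * g = x * (x ^ k * g)" by (simp add: mult.assoc)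
  also have "\<dots> = x * g * x' ^ k" by (simp add: Suc mult.assoc)
  also have "\<dots> = g * x' ^ Suc k" by (simp add: assms mult.assoc power_commutes)
  finally show ?case .
qed simp

lemma diag_sum_intertwine:
  fixes x y g x' y' :: "'a::ring_1"
  assumes "x * g = g * x'" and "y * g = g * y'"
  shows "diag_sum d x y * g = g * diag_sum d x' y'"
  unfolding diag_sum_def sum_distrib_left sum_distrib_right
proof (rule sum.cong[OF refl])
  fix s
  have "x ^ s * y ^ (d - s) * g = x ^ s * g * y' ^ (d - s)"
    by (simp add: power_intertwine[OF assms(2)] mult.assoc)
  also have "\<dots> = g * (x' ^ s * y' ^ (d - s))"
    by (simp add: power_intertwine[OF assms(1)] mult.assoc)
  finally show "x ^ s * y ^ (d - s) * g = g * (x' ^ s * y' ^ (d - s))" .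
qed

(* For commuting d-th roots of unity, diag_sum is symmetric: reindex s -> d - s. *)
lemma diag_sum_sym:
  fixes x y :: "'a::ring_1"
  assumes "x * y = y * x" "x ^ d = 1" "y ^ d = 1" "d \<ge> 1"
  shows "diag_sum d x y = diag_sum d y x"
proof -
  obtain m where d: "d = Suc m" using assms(4) by (cases d) auto
  have powers_commute: "\<And>i j. x ^ i * y ^ j = y ^ j * x ^ i"
    by (metis assms(1) power_commuting_commutes power_commutes)
  have split_first: "\<And>x y :: 'a. x ^ d = 1 \<Longrightarrow>
      diag_sum d x y = y ^ d + (\<Sum>s<m. x ^ Suc s * y ^ (m - s))"
    unfolding diag_sum_def d sum.lessThan_Suc_shift by simp
  have "(\<Sum>s<m. x ^ Suc s * y ^ (m - s))
      = (\<Sum>s<m. x ^ Suc (m - Suc s) * y ^ (m - (m - Suc s)))"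
    by (rule sum.reindex_bij_witness[where i="\<lambda>i. m - Suc i" and j="\<lambda>i. m - Suc i"]) auto
  also have "\<dots> = (\<Sum>s<m. y ^ Suc s * x ^ (m - s))"
    by (rule sum.cong[OF refl]) (simp add: Suc_diff_Suc, metis powers_commute power_Suc)
  finally show ?thesis using split_first[of x y] split_first[of y x] assms by simp
qed

(* The key annihilation property of the idempotent: (x - y) F(x,y) = 0, since
   multiplication by x and by y both shift the sum by one step (cyclically). *)
lemma diag_sum_annihilated:
  fixes x y :: "'a::ring_1"
  assumes "x * y = y * x" "x ^ d = 1" "y ^ d = 1" "d \<ge> 1"
  shows "(x - y) * diag_sum d x y = 0"
proof -
  obtain m where d: "d = Suc m" using assms(4) by (cases d) auto
  let ?S = "\<Sum>s<m. x ^ Suc s * y ^ (Suc m - s)"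
  have powers_commute: "\<And>i j. x ^ i * y ^ j = y ^ j * x ^ i"
    by (metis assms(1) power_commuting_commutes power_commutes)
  have "x * diag_sum d x y = ?S + x ^ d * y"
    unfolding diag_sum_def d sum.lessThan_Suc
    by (simp add: distrib_left sum_distrib_left mult.assoc)
  hence x_shift: "x * diag_sum d x y = ?S + y" using assms by simp
  have "y * diag_sum d x y = (\<Sum>s<Suc m. x ^ s * y ^ Suc (Suc m - s))"
    unfolding diag_sum_def d sum_distrib_left
    by (rule sum.cong[OF refl]) (metis powers_commute mult.assoc power_Suc)
  also have "\<dots> = y ^ Suc d + ?S"
    unfolding sum.lessThan_Suc_shift d by (simp add: Suc_diff_le)
  finally have y_shift: "y * diag_sum d x y = y + ?S" using assms by simp
  show ?thesis using x_shift y_shift by (simp add: algebra_simps)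
qed

lemma laurent_alg_of_nat_invertible:
  assumes "laurent_alg phi u" and "k > 0"
  shows "phi (1 / of_nat k) * of_nat k = 1"
proof -
  have hom: "phi 1 = 1" "\<And>a b. phi (a + b) = phi a + phi b" "\<And>a b. phi (a * b) = phi a * phi b"
    using assms(1) unfolding laurent_alg_def by blast+
  have phi_of_nat: "phi (of_nat j) = of_nat j" for j
  proof (induction j)
    case 0
    have "phi 0 = phi 0 + phi 0" using hom(2)[of 0 0] by simp
    then show ?case by simp
  next
    case (Suc j)
    then show ?case using hom(1) hom(2)[of 1 "of_nat j"] by (simp add: add.commute)
  qed
  have "phi (1 / of_nat k) * of_nat k = phi (1 / of_nat k * of_nat k)"
    by (simp only: hom(3) phi_of_nat)
  also have "\<dots> = 1" using assms(2) hom(1) by simp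
  finally show ?thesis .
qed

lemma cancel_invertible_multiple:
  fixes c w :: "'a::ring_1"
  assumes "c * of_nat k = 1" and "of_nat k * w = 0"
  shows "w = 0"
  by (metis assms mult.assoc mult_1 mult_zero_right)

lemma of_nat_3_mult: "of_nat 3 * w = w + w + (w :: 'a::ring_1)"
proof -
  have "(of_nat 3 :: 'a) = 1 + 1 + 1" by simp
  then show ?thesis by (simp only: distrib_right mult_1)
qed

lemma of_nat_6_mult: "of_nat 6 * w = w + w + w + w + w + (w :: 'a::ring_1)"
proof -
  have "(of_nat 6 :: 'a) = 1 + 1 + 1 + 1 + 1 + 1" by simp
  then show ?thesis by (simp only: distrib_right mult_1)
qed

section \<open>Intertwined triples\<close>

(* The Temperley-Lieb element whose vanishing defines YTL. *)
definition tl_elem :: "'a::ring_1 \<Rightarrow> 'a \<Rightarrow> 'a" where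
  "tl_elem a b = a * b * a + a * b + b * a + a + b + 1"

lemma tl_elem_braid_sym:
  fixes a b :: "'a::ring_1"
  assumes "a * b * a = b * a * b"
  shows "tl_elem b a = tl_elem a b"
  using assms unfolding tl_elem_def by (simp add: algebra_simps)

(* Sandwiching the Temperley-Lieb element: if Q commutes with a, E commutes with a and
   Q b E = 0, then every term of Q R E containing b vanishes. *)
lemma sandwich_tl_elem:
  fixes Q E a b :: "'a::ring_1"
  assumes Qa: "Q * a = a * Q" and Ea: "E * a = a * E" and QbE: "Q * b * E = 0"
  shows "Q * tl_elem a b * E = Q * E * (1 + a)"
proof -
  have Qa': "Q * (a * w) = a * (Q * w)" for w using Qa by (metis mult.assoc)
  have QbE': "Q * (b * (E * w)) = 0" for w using QbE by (metis mult.assoc mult_zero_left)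
  show ?thesis unfolding tl_elem_def
    by (simp add: distrib_left distrib_right mult.assoc Qa' Ea[symmetric] QbE'
        QbE[unfolded mult.assoc])
qed

locale intertwined_triple =
  fixes x y z a b :: "'a::ring_1"
  assumes xy: "x * y = y * x" and xz: "x * z = z * x" and yz: "y * z = z * y"
    and xa: "x * a = a * y" and ya: "y * a = a * x" and za: "z * a = a * z"
    and xb: "x * b = b * x" and yb: "y * b = b * z" and zb: "z * b = b * y"
begin

lemma mirror: "intertwined_triple z y x b a"
  by unfold_locales (simp_all add: xy xz yz xa ya za xb yb zb)

lemmas push_right =
  xa[symmetric] ya[symmetric] za[symmetric] xb[symmetric] yb[symmetric] zb[symmetric]
lemma push_right_assoc:
  "\<And>w. a * (y * w) = x * (a * w)" "\<And>w. a * (x * w) = y * (a * w)" "\<And>w. a * (z * w) = z * (a * w)"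
  "\<And>w. b * (x * w) = x * (b * w)" "\<And>w. b * (z * w) = y * (b * w)" "\<And>w. b * (y * w) = z * (b * w)"
  by (simp_all add: mult.assoc[symmetric] push_right)
lemma sort_commuting:
  "y * x = x * y" "z * x = x * z" "z * y = y * z"
  "\<And>w. y * (x * w) = x * (y * w)" "\<And>w. z * (x * w) = x * (z * w)" "\<And>w. z * (y * w) = y * (z * w)"
  by (simp_all add: mult.assoc[symmetric] xy xz yz)
lemmas normalize = push_right push_right_assoc sort_commuting

(* Relation (2) is the commutator of x with the Temperley-Lieb element. *)
lemma linear_identity:
  "(x - z) * (1 + a) + (x - y) * (b + b * a) = x * tl_elem a b - tl_elem a b * z"
  unfolding tl_elem_def by (simp add: algebra_simps normalize)

lemma linear_relation:
  assumes "tl_elem a b = 0"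
  shows "(x - z) * (1 + a) + (x - y) * (b + b * a) = 0"
  using linear_identity assms by simp

definition defect :: 'a where
  "defect = (z - y) * (z - x) * (1 + a)"

(* Its "coefficient" P = (z-y)(z-x) is symmetric in x, y, so it commutes with a. *)
lemma coefficient_commutes: "(z - y) * (z - x) * a = a * ((z - y) * (z - x))"
  by (simp add: algebra_simps normalize)

(* Multiplying relation (2) by z - y shows that b fixes the defect. *)
lemma defect_fixed_by_b:
  assumes "tl_elem a b = 0"
  shows "b * defect = defect"
proof -
  have "(z - y) * ((x - z) * (1 + a) + (x - y) * (b + b * a)) = b * defect - defect"
    unfolding defect_def by (simp add: algebra_simps normalize)
  then show ?thesis using linear_relation[OF assms] by simp
qed

(* With A = 1 + a, R = A + A b A; since b fixes the defect W = P A = A P this gives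
   A A W = - A W, and the quadratic relation A A = 2 A + q E A turns it into
   3 W + q E W = 0. *)
lemma defect_quadratic:
  fixes q E :: 'a
  assumes R: "tl_elem a b = 0" and quad: "a ^ 2 = 1 + q * E + q * E * a"
  shows "of_nat 3 * defect + q * E * defect = 0"
proof -
  define A where "A = 1 + a"
  define P where "P = (z - y) * (z - x)"
  have PA: "P * A = A * P" and W: "defect = A * P"
    using coefficient_commutes unfolding A_def P_def defect_def by (simp_all add: algebra_simps)
  have "tl_elem a b = A + A * b * A" unfolding A_def tl_elem_def by (simp add: algebra_simps)
  hence AbA: "A * b * A = - A" using R by (simp add: eq_neg_iff_add_eq_0 add.commute)
  have "- (A * P) = A * (b * defect)" by (simp only: W mult.assoc[symmetric] AbA) simp
  also have "\<dots> = A * A * P" using defect_fixed_by_b[OF R] by (simp add: W mult.assoc)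
  finally have "A * A * P + A * P = 0" by (simp add: eq_neg_iff_add_eq_0[symmetric])
  moreover have "A * A + A = A + A + A + q * E * A"
    unfolding A_def using quad by (simp add: algebra_simps power2_eq_square)
  ultimately have "(A + A + A + q * E * A) * P = 0" by (metis distrib_right)
  then show ?thesis unfolding of_nat_3_mult by (simp add: W distrib_right mult.assoc)
qed

(* Sandwiching R between E's kills every term containing b (since b E = E' b and
   (z - x) E' = 0) and leaves E E W. *)
lemma defect_sandwich:
  fixes E E' :: 'a
  assumes R: "tl_elem a b = 0"
    and Ex: "E * x = x * E" and Ey: "E * y = y * E" and Ez: "E * z = z * E"
    and Ea: "E * a = a * E" and bE: "b * E = E' * b" and ann: "(z - x) * E' = 0"
  shows "E * E * defect = 0"
proof -
  define P where "P = (z - y) * (z - x)"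
  have "E * (z - y) = (z - y) * E" "E * (z - x) = (z - x) * E"
    by (simp_all add: algebra_simps Ex Ey Ez)
  hence PE: "P * E = E * P" unfolding P_def by (metis mult.assoc)
  have PEa: "P * E * a = a * (P * E)"
    using coefficient_commutes Ea by (metis P_def mult.assoc)
  have "P * E * b * E = E * (z - y) * ((z - x) * E') * b"
    using PE bE by (metis P_def mult.assoc)
  hence PEbE: "P * E * b * E = 0" using ann by simp
  have "E * E * defect = P * E * E * (1 + a)"
    unfolding defect_def P_def[symmetric] by (metis PE mult.assoc)
  also have "\<dots> = P * E * tl_elem a b * E"
    using sandwich_tl_elem[OF PEa Ea PEbE] by simp
  finally show ?thesis using R by simp
qed

lemma quadratic_relation:
  fixes q E E' c :: 'a
  assumes R: "tl_elem a b = 0" and quad: "a ^ 2 = 1 + q * E + q * E * a"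
    and q: "\<And>w. q * w = w * q"
    and Ex: "E * x = x * E" and Ey: "E * y = y * E" and Ez: "E * z = z * E"
    and Ea: "E * a = a * E" and bE: "b * E = E' * b" and ann: "(z - x) * E' = 0"
    and c: "c * of_nat 3 = 1"
  shows "(z - y) * (z - x) * (a + 1) = 0"
proof -
  have three: "of_nat 3 * defect + q * E * defect = 0" by (rule defect_quadratic[OF R quad])
  have "of_nat 3 * (E * defect)
      = E * (of_nat 3 * defect + q * E * defect) - q * (E * E * defect)"
    unfolding of_nat_3_mult by (simp add: algebra_simps q)
  hence "of_nat 3 * (E * defect) = 0"
    using three defect_sandwich[OF R Ex Ey Ez Ea bE ann] by simp
  hence "E * defect = 0" using c by (rule cancel_invertible_multiple[rotated])
  hence "of_nat 3 * defect = 0" using three by (simp add: mult.assoc)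
  hence "defect = 0" using c by (rule cancel_invertible_multiple[rotated])
  then show ?thesis unfolding defect_def by (simp add: add.commute)
qed

(* Relation (4) when E is the idempotent c F(x,y) attached to d-th roots of unity:
   E then commutes with x, y, z and with a, and b carries it to c F(x,z),
   which is annihilated by z - x. *)
lemma quadratic_relation_roots_of_unity:
  fixes q c c3 :: 'a and d :: nat
  assumes roots: "x ^ d = 1" "y ^ d = 1" "z ^ d = 1" and "d \<ge> 1"
    and c: "\<And>w. c * w = w * c" and q: "\<And>w. q * w = w * q"
    and R: "tl_elem a b = 0"
    and quad: "a ^ 2 = 1 + q * (c * diag_sum d x y) + q * (c * diag_sum d x y) * a"
    and c3: "c3 * of_nat 3 = 1"
  shows "(z - y) * (z - x) * (a + 1) = 0"
proof -
  define E where "E = c * diag_sum d x y"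
  define E' where "E' = c * diag_sum d x z"
  have scale: "F * w = w * F \<Longrightarrow> (c * F) * w = w * (c * F)" for F w
    by (metis c mult.assoc)
  have Ex: "E * x = x * E" and Ey: "E * y = y * E" and Ez: "E * z = z * E"
    unfolding E_def by (intro scale diag_sum_intertwine; simp add: xy xz yz)+
  have "diag_sum d x y * a = a * diag_sum d x y"
    using diag_sum_intertwine[OF xa ya, of d] diag_sum_sym[OF xy roots(1,2) \<open>d \<ge> 1\<close>] by simp
  hence Ea: "E * a = a * E" unfolding E_def by (rule scale)
  have bE: "b * E = E' * b"
    unfolding E_def E'_def using diag_sum_intertwine[OF xb zb, of d] c by (metis mult.assoc)
  have "(x - z) * E' = 0" unfolding E'_def
    using diag_sum_annihilated[OF xz roots(1,3) \<open>d \<ge> 1\<close>] c by (metis mult.assoc mult_zero_right)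
  hence ann: "(z - x) * E' = 0" by (metis minus_diff_eq minus_mult_left neg_equal_0_iff_equal)
  show ?thesis
    using quadratic_relation[OF R _ q Ex Ey Ez Ea bE ann c3] quad by (simp add: E_def)
qed

(* Relation (6): D = (x-y)(y-z)(x-z) anticommutes with a and b, so (4) and its mirror
   say a D = D = b D; then R D = 6 D, and 6 is invertible. *)
lemma cubic_relation:
  fixes c6 :: 'a
  assumes R: "tl_elem a b = 0"
    and Wa: "(z - y) * (z - x) * (a + 1) = 0" and Wb: "(x - y) * (x - z) * (b + 1) = 0"
    and c6: "c6 * of_nat 6 = 1"
  shows "(x - y) * (y - z) * (x - z) = 0"
proof -
  define D where "D = (x - y) * (y - z) * (x - z)"
  have "D * (a + 1) = (x - y) * ((z - y) * (z - x) * (a + 1))"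
    unfolding D_def by (simp add: algebra_simps normalize)
  moreover have "D * a = - (a * D)" unfolding D_def by (simp add: algebra_simps normalize)
  ultimately have aD: "a * D = D" using Wa by (simp add: distrib_left add_eq_0_iff add.commute)
  have "D * (b + 1) = (y - z) * ((x - y) * (x - z) * (b + 1))"
    unfolding D_def by (simp add: algebra_simps normalize)
  moreover have "D * b = - (b * D)" unfolding D_def by (simp add: algebra_simps normalize)
  ultimately have bD: "b * D = D" using Wb by (simp add: distrib_left add_eq_0_iff add.commute)
  have "of_nat 6 * D = tl_elem a b * D"
    unfolding tl_elem_def of_nat_6_mult by (simp add: distrib_right mult.assoc aD bD)
  hence "of_nat 6 * D = 0" using R by simp
  then show ?thesis unfolding D_def using c6 by (rule cancel_invertible_multiple[rotated])
qed

end

section \<open>The local relations in the Yokonuma-Temperley-Lieb algebra\<close>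

lemma YTL_local_relations:
  fixes phi :: "complex \<Rightarrow> 'a::ring_1"
  assumes "d \<ge> 1" and YTL: "YTL_rels d n phi u g t" and i: "1 \<le> i" "i < n - 1"
  defines "x \<equiv> t i" and "y \<equiv> t (i + 1)" and "z \<equiv> t (i + 2)"
    and "a \<equiv> g i" and "b \<equiv> g (i + 1)"
  shows "(x - z) * (1 + a) + (x - y) * (b + b * a) = 0"
    and "(z - x) * (1 + b) + (z - y) * (a + a * b) = 0"
    and "(z - y) * (z - x) * (a + 1) = 0"
    and "(x - z) * (x - y) * (b + 1) = 0"
    and "(x - y) * (y - z) * (x - z) = 0"
proof -
  note H = YTL[unfolded YTL_rels_def YH_rels_def]
  have alg: "laurent_alg phi u" using H by blast
  have tt: "\<And>j k. 1 \<le> j \<Longrightarrow> j \<le> n \<Longrightarrow> 1 \<le> k \<Longrightarrow> k \<le> n \<Longrightarrow> t j * t k = t k * t j"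
    using H by blast
  have tg: "\<And>k j. 1 \<le> k \<Longrightarrow> k \<le> n - 1 \<Longrightarrow> 1 \<le> j \<Longrightarrow> j \<le> n \<Longrightarrow>
      t j * g k = g k * t (sw k j)"
    using H by blast
  have triple: "intertwined_triple x y z a b"
    unfolding x_def y_def z_def a_def b_def
    using i tt[of i "i + 1"] tt[of i "i + 2"] tt[of "i + 1" "i + 2"] tg[of i] tg[of "i + 1"]
    by unfold_locales (auto simp: sw_def)
  interpret triple: intertwined_triple x y z a b by (rule triple)
  interpret mirror: intertwined_triple z y x b a by (rule triple.mirror)
  have R: "tl_elem a b = 0" unfolding tl_elem_def a_def b_def using H i by auto
  have "a * b * a = b * a * b" unfolding a_def b_def using H i by auto
  hence R': "tl_elem b a = 0" using R tl_elem_braid_sym by metis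
  have roots: "x ^ d = 1" "y ^ d = 1" "z ^ d = 1" unfolding x_def y_def z_def using H i by auto
  define c where "c = phi (1 / of_nat d)"
  have c: "\<And>w. c * w = w * c" using alg unfolding c_def laurent_alg_def by blast
  have q: "\<And>w. (u - 1) * w = w * (u - 1)" using alg unfolding laurent_alg_def
    by (simp add: algebra_simps)
  have ee: "\<And>j. ee phi d t j = c * diag_sum d (t j) (t (j + 1))"
    unfolding ee_def diag_sum_def c_def by simp
  have qa: "a ^ 2 = 1 + (u - 1) * (c * diag_sum d x y) + (u - 1) * (c * diag_sum d x y) * a"
    using H i unfolding x_def y_def a_def ee by auto
  have "b ^ 2 = 1 + (u - 1) * (c * diag_sum d y z) + (u - 1) * (c * diag_sum d y z) * b"
    using H i unfolding y_def z_def b_def ee by (auto simp: add.assoc)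
  hence qb: "b ^ 2 = 1 + (u - 1) * (c * diag_sum d z y) + (u - 1) * (c * diag_sum d z y) * b"
    using diag_sum_sym[OF triple.yz roots(2,3) \<open>d \<ge> 1\<close>] by simp
  have c3: "phi (1 / of_nat 3) * of_nat 3 = 1" and c6: "phi (1 / of_nat 6) * of_nat 6 = 1"
    by (rule laurent_alg_of_nat_invertible[OF alg], simp)+
  show "(x - z) * (1 + a) + (x - y) * (b + b * a) = 0" by (rule triple.linear_relation[OF R])
  show "(z - x) * (1 + b) + (z - y) * (a + a * b) = 0" by (rule mirror.linear_relation[OF R'])
  show Wa: "(z - y) * (z - x) * (a + 1) = 0"
    by (rule triple.quadratic_relation_roots_of_unity[OF roots \<open>d \<ge> 1\<close> c q R qa c3])
  have Wb: "(x - y) * (x - z) * (b + 1) = 0"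
    by (rule mirror.quadratic_relation_roots_of_unity[OF roots(3,2,1) \<open>d \<ge> 1\<close> c q R' qb c3])
  moreover have "(x - z) * (x - y) = (x - y) * (x - z)"
    by (simp add: algebra_simps triple.sort_commuting)
  ultimately show "(x - z) * (x - y) * (b + 1) = 0" by simp
  show "(x - y) * (y - z) * (x - z) = 0" by (rule triple.cubic_relation[OF R Wa Wb c6])
qed


(* Relation (1) is a defining relation, (2)-(4) and (6) are the local relations at i,
   and (5) is the mirrored quadratic relation at i - 1. *)
theorem mainTheorem12:
  fixes d n :: nat and phi :: "complex \<Rightarrow> 'a::ring_1" and u :: 'a
    and g t :: "nat \<Rightarrow> 'a"
  assumes "d \<ge> 1" and "n \<ge> 3"
    and "YTL_rels d n phi u g t"
  shows "(\<forall>i. 1 \<le> i \<and> i < n - 1 \<longrightarrow>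
            g i * g (i+1) * g i + g i * g (i+1) + g (i+1) * g i + g i + g (i+1) + 1 = 0)
       \<and> (\<forall>i. 1 \<le> i \<and> i < n - 1 \<longrightarrow>
            (t i - t (i+2)) * (1 + g i) + (t i - t (i+1)) * (g (i+1) + g (i+1) * g i) = 0)
       \<and> (\<forall>i. 1 \<le> i \<and> i < n - 1 \<longrightarrow>
            (t (i+2) - t i) * (1 + g (i+1)) + (t (i+2) - t (i+1)) * (g i + g i * g (i+1)) = 0)
       \<and> (\<forall>i. 1 \<le> i \<and> i < n - 1 \<longrightarrow>
            (t (i+2) - t (i+1)) * (t (i+2) - t i) * (g i + 1) = 0)
       \<and> (\<forall>i. 1 < i \<and> i \<le> n - 1 \<longrightarrow>
            (t (i-1) - t (i+1)) * (t (i-1) - t i) * (g i + 1) = 0)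
       \<and> (\<forall>i. 1 \<le> i \<and> i < n - 1 \<longrightarrow>
            (t i - t (i+1)) * (t (i+1) - t (i+2)) * (t i - t (i+2)) = 0)"
proof (intro conjI allI impI)
  fix i assume "1 \<le> i \<and> i < n - 1"
  then show "g i * g (i+1) * g i + g i * g (i+1) + g (i+1) * g i + g i + g (i+1) + 1 = 0"
    using assms(3) unfolding YTL_rels_def by auto
next
  fix i assume "1 < i \<and> i \<le> n - 1"
  hence "1 \<le> i - 1" "i - 1 < n - 1" and shift: "i - 1 + 1 = i" "i - 1 + 2 = i + 1" by auto
  from YTL_local_relations(4)[OF assms(1,3) this(1,2)]
  show "(t (i-1) - t (i+1)) * (t (i-1) - t i) * (g i + 1) = 0" unfolding shift .
next
  fix i assume "1 \<le> i \<and> i < n - 1"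
  note local = YTL_local_relations[OF assms(1,3), of i]
  show "(t i - t (i+2)) * (1 + g i) + (t i - t (i+1)) * (g (i+1) + g (i+1) * g i) = 0"
    using local(1) \<open>1 \<le> i \<and> i < n - 1\<close> by blast
  show "(t (i+2) - t i) * (1 + g (i+1)) + (t (i+2) - t (i+1)) * (g i + g i * g (i+1)) = 0"
    using local(2) \<open>1 \<le> i \<and> i < n - 1\<close> by blast
  show "(t (i+2) - t (i+1)) * (t (i+2) - t i) * (g i + 1) = 0"
    using local(3) \<open>1 \<le> i \<and> i < n - 1\<close> by blast
  show "(t i - t (i+1)) * (t (i+1) - t (i+2)) * (t i - t (i+2)) = 0"
    using local(5) \<open>1 \<le> i \<and> i < n - 1\<close> by blast
qed

end
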